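(* Let $\mu, \gamma > 0$ and $\epsilon \geq 0$, and let $\mathcal{S}^\epsilon_{\mu,\gamma}$ denote the class of all operators $H: L_2 \to L_2$ (over all dimensions $n$) that are $\epsilon$-strongly incrementally $(\mu,\gamma)$-dissipative. Then \[ \mathrm{SRG}(\mathcal{S}^\epsilon_{\mu,\gamma}) = \mathcal{D}_1 \cup \mathcal{D}_2, \] where $\mathcal{D}_1 = \{z \in \mathbb{C} : |z| \leq \mu\}$ and $\mathcal{D}_2 = \{z \in \mathbb{C} : |z| \leq \gamma,\ \Re z \geq \epsilon\}$. Moreover, the class $\mathcal{S}^\epsilon_{\mu,\gamma}$ is SRG-full, i.e. an operator $H$ belongs to $\mathcal{S}^\epsilon_{\mu,\gamma}$ if and only if $\mathrm{SRG}(H) \subseteq \mathcal{D}_1\cup\mathcal{D}_2$.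
   Context: $L_2 = L_2(\mathbb{R}^n)$ is the Hilbert space of square-integrable signals $u:\mathbb{R}_{\ge 0}\to\mathbb{R}^n$ with inner product $\langle u, y\rangle = \int_0^\infty u(t)^\top y(t)\,dt$ and induced norm $\|\cdot\|$. An operator $H$ on a Hilbert space $\mathcal{H}$ is a possibly multi-valued map, identified with its relation $\{(u,y) : y \in H(u)\}$. Definition: for $\mu,\gamma,\epsilon\ge 0$, $H:L_2\to L_2$ is $\epsilon$-strongly incrementally $(\mu,\gamma)$-dissipative if for all $u_1,u_2\in L_2$, $y_1\in H(u_1)$, $y_2\in H(u_2)$, either (i) $\|y_1-y_2\|\le \mu\|u_1-u_2\|$, or both (ii) $\langle u_1-u_2, y_1-y_2\rangle \ge \epsilon\|u_1-u_2\|^2$ and (iii) $\|y_1-y_2\|\le\gamma\|u_1-u_2\|$ hold (or all three hold). If $\epsilon=0$ it is called incrementally $(\mu,\gamma)$-dissipative. Scaled Relative Graph (SRG): for $u,y$ nonzero in a Hilbert space, $\angle(u,y) = \arccos\frac{\Re\langle u,y\rangle}{\|u\|\|y\|}\in[0,\pi]$. For $u_1\ne u_2$, $z_H(u_1,u_2) = \left\{\frac{\|y_1-y_2\|}{\|u_1-u_2\|}e^{\pm j\angle(u_1-u_2,\,y_1-y_2)} : y_1\in H(u_1), y_2\in H(u_2)\right\}$ (with the convention that the angle term is irrelevant when $y_1=y_2$, giving the point $0$). If $u_1=u_2$ and there exist $y_1\ne y_2$ in $H(u_1)$, then $z_H(u_1,u_1)=\{\infty\}$; otherwise it is empty. $\mathrm{SRG}(H)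 = \bigcup_{u_1,u_2} z_H(u_1,u_2)$, a subset of the extended complex plane. For a class $\mathcal{A}$ of operators, $\mathrm{SRG}(\mathcal{A}) = \bigcup_{H\in\mathcal{A}}\mathrm{SRG}(H)$. A class $\mathcal{A}$ is SRG-full if for every operator $H$: $H\in\mathcal{A} \iff \mathrm{SRG}(H)\subseteq \mathrm{SRG}(\mathcal{A})$. *)

theory Defs
  imports "HOL-Analysis.Analysis"
begin

text \<open>A representative of a signal u : R_{>=0} -> R^n is encoded as a function
  f :: real => nat => real, where f t i is the i-th component (i < n) at time t.
  For definiteness, representatives vanish for t < 0 and for components i >= n.\<close>

definition sig :: "nat \<Rightarrow> (real \<Rightarrow> nat \<Rightarrow> real) \<Rightarrow> bool" where
  "sig n f \<longleftrightarrow> (\<forall>t i. (t < 0 \<or> n \<le> i) \<longrightarrow> f t i = 0) \<and>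
     (\<forall>i<n. (\<lambda>t. f t i) \<in> borel_measurable lborel \<and> integrable lborel (\<lambda>t. (f t i)\<^sup>2))"

text \<open>Elements of L_2(R^n): equivalence classes of representatives modulo
  equality almost everywhere.\<close>

definition L2cls :: "nat \<Rightarrow> (real \<Rightarrow> nat \<Rightarrow> real) \<Rightarrow> (real \<Rightarrow> nat \<Rightarrow> real) set" where
  "L2cls n f = {g. sig n g \<and> (AE t in lborel. g t = f t)}"

definition L2 :: "nat \<Rightarrow> (real \<Rightarrow> nat \<Rightarrow> real) set set" where
  "L2 n = L2cls n ` {f. sig n f}"

definition rep :: "(real \<Rightarrow> nat \<Rightarrow> real) set \<Rightarrow> (real \<Rightarrow> nat \<Rightarrow> real)" where
  "rep c = (SOME f. f \<in> c)"

definition ip_diff :: "nat \<Rightarrow> (real \<Rightarrow> nat \<Rightarrow> real) set \<Rightarrow> (real \<Rightarrow> nat \<Rightarrow> real) set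
    \<Rightarrow> (real \<Rightarrow> nat \<Rightarrow> real) set \<Rightarrow> (real \<Rightarrow> nat \<Rightarrow> real) set \<Rightarrow> real" where
  "ip_diff n u v x y =
     (\<Sum>i<n. LINT t|lborel. (rep u t i - rep v t i) * (rep x t i - rep y t i))"

definition nrm_diff :: "nat \<Rightarrow> (real \<Rightarrow> nat \<Rightarrow> real) set \<Rightarrow> (real \<Rightarrow> nat \<Rightarrow> real) set \<Rightarrow> real" where
  "nrm_diff n u v = sqrt (ip_diff n u v u v)"

text \<open>An operator on L_2(R^n) is a (possibly multi-valued) map, identified with its
  relation; y \<in> H(u) iff (u, y) \<in> H.\<close>

definition is_op :: "nat \<Rightarrow> ((real \<Rightarrow> nat \<Rightarrow> real) set \<times> (real \<Rightarrow> nat \<Rightarrow> real) set) set \<Rightarrow> bool" where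
  "is_op n H \<longleftrightarrow> H \<subseteq> L2 n \<times> L2 n"

definition strongly_incr_dissipative ::
  "nat \<Rightarrow> real \<Rightarrow> real \<Rightarrow> real \<Rightarrow> ((real \<Rightarrow> nat \<Rightarrow> real) set \<times> (real \<Rightarrow> nat \<Rightarrow> real) set) set \<Rightarrow> bool" where
  "strongly_incr_dissipative n \<epsilon> \<mu> \<gamma> H \<longleftrightarrow>
     (\<forall>u1 y1 u2 y2. (u1, y1) \<in> H \<longrightarrow> (u2, y2) \<in> H \<longrightarrow>
        nrm_diff n y1 y2 \<le> \<mu> * nrm_diff n u1 u2 \<or>
        (ip_diff n u1 u2 y1 y2 \<ge> \<epsilon> * (nrm_diff n u1 u2)\<^sup>2 \<and>
         nrm_diff n y1 y2 \<le> \<gamma> * nrm_diff n u1 u2))"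

definition S_class :: "nat \<Rightarrow> real \<Rightarrow> real \<Rightarrow> real
    \<Rightarrow> ((real \<Rightarrow> nat \<Rightarrow> real) set \<times> (real \<Rightarrow> nat \<Rightarrow> real) set) set set" where
  "S_class n \<epsilon> \<mu> \<gamma> = {H. is_op n H \<and> strongly_incr_dissipative n \<epsilon> \<mu> \<gamma> H}"

text \<open>Extended complex plane: None represents the point infinity.\<close>

definition angle_diff :: "nat \<Rightarrow> (real \<Rightarrow> nat \<Rightarrow> real) set \<Rightarrow> (real \<Rightarrow> nat \<Rightarrow> real) set
    \<Rightarrow> (real \<Rightarrow> nat \<Rightarrow> real) set \<Rightarrow> (real \<Rightarrow> nat \<Rightarrow> real) set \<Rightarrow> real" where
  "angle_diff n u1 u2 y1 y2 =
     arccos (ip_diff n u1 u2 y1 y2 / (nrm_diff n u1 u2 * nrm_diff n y1 y2))"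

definition zH :: "nat \<Rightarrow> ((real \<Rightarrow> nat \<Rightarrow> real) set \<times> (real \<Rightarrow> nat \<Rightarrow> real) set) set
    \<Rightarrow> (real \<Rightarrow> nat \<Rightarrow> real) set \<Rightarrow> (real \<Rightarrow> nat \<Rightarrow> real) set \<Rightarrow> complex option set" where
  "zH n H u1 u2 =
     (if u1 \<noteq> u2 then
        {Some (if y1 = y2 then 0
               else complex_of_real (nrm_diff n y1 y2 / nrm_diff n u1 u2)
                      * cis (s * angle_diff n u1 u2 y1 y2)) |
           y1 y2 s. (u1, y1) \<in> H \<and> (u2, y2) \<in> H \<and> s \<in> {1, -1}}
      else if (\<exists>y1 y2. (u1, y1) \<in> H \<and> (u1, y2) \<in> H \<and> y1 \<noteq> y2) then {None}
      else {})"

definition SRG :: "nat \<Rightarrow> ((real \<Rightarrow> nat \<Rightarrow> real) set \<times> (real \<Rightarrow> nat \<Rightarrow> real) set) set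
    \<Rightarrow> complex option set" where
  "SRG n H = (\<Union>u1\<in>L2 n. \<Union>u2\<in>L2 n. zH n H u1 u2)"

definition SRG_S :: "real \<Rightarrow> real \<Rightarrow> real \<Rightarrow> complex option set" where
  "SRG_S \<epsilon> \<mu> \<gamma> = (\<Union>n\<in>{1..}. \<Union>H\<in>S_class n \<epsilon> \<mu> \<gamma>. SRG n H)"

definition D1 :: "real \<Rightarrow> complex set" where
  "D1 \<mu> = {z. cmod z \<le> \<mu>}"

definition D2 :: "real \<Rightarrow> real \<Rightarrow> complex set" where
  "D2 \<epsilon> \<gamma> = {z. cmod z \<le> \<gamma> \<and> Re z \<ge> \<epsilon>}"

end

theory Submission
  imports Defs
begin

(* For distinct inputs u1, u2 the SRG point z of a pair of responses satisfies
   |z| = ||y1 - y2|| / ||u1 - u2|| and Re z = <u1 - u2, y1 - y2> / ||u1 - u2||^2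
   (Cauchy-Schwarz makes the angle a genuine arccos), so the dissipativity
   inequalities for that pair say exactly that z lies in D1 \<union> D2; for equal inputs
   both the inequalities and the absence of the point infinity say y1 = y2. This
   gives one inclusion and SRG-fullness. Conversely, every z in D1 \<union> D2 lies in the
   SRG of the two-point operator {(0, 0), (e, y)} on L_2(R), where e and y are step
   functions on [0,1) and [1,2) with coefficients (1, 0) and (Re z, |Im z|). *)

definition sig_diff :: "(real \<Rightarrow> nat \<Rightarrow> real) \<Rightarrow> (real \<Rightarrow> nat \<Rightarrow> real) \<Rightarrow> real \<Rightarrow> nat \<Rightarrow> real" where
  "sig_diff f g = (\<lambda>t i. f t i - g t i)"

definition sq_integrable :: "nat \<Rightarrow> (real \<Rightarrow> nat \<Rightarrow> real) \<Rightarrow> bool" where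
  "sq_integrable n a \<longleftrightarrow>
     (\<forall>i<n. (\<lambda>t. a t i) \<in> borel_measurable lborel \<and> integrable lborel (\<lambda>t. (a t i)\<^sup>2))"

definition lint_inner :: "nat \<Rightarrow> (real \<Rightarrow> nat \<Rightarrow> real) \<Rightarrow> (real \<Rightarrow> nat \<Rightarrow> real) \<Rightarrow> real" where
  "lint_inner n a b = (\<Sum>i<n. LINT t|lborel. a t i * b t i)"

lemma ip_diff_eq_lint_inner:
  "ip_diff n u v x y = lint_inner n (sig_diff (rep u) (rep v)) (sig_diff (rep x) (rep y))"
  unfolding ip_diff_def lint_inner_def sig_diff_def by simp

lemma sig_imp_sq_integrable: "sig n f \<Longrightarrow> sq_integrable n f"
  unfolding sig_def sq_integrable_def by auto

lemma sq_integrable_integrable_mult: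
  assumes "sq_integrable n a" "sq_integrable n b" "i < n"
  shows "integrable lborel (\<lambda>t. a t i * b t i)"
proof (rule Bochner_Integration.integrable_bound[where f = "\<lambda>t. (a t i)\<^sup>2 + (b t i)\<^sup>2"])
  show "integrable lborel (\<lambda>t. (a t i)\<^sup>2 + (b t i)\<^sup>2)"
    using assms unfolding sq_integrable_def by auto
  show "(\<lambda>t. a t i * b t i) \<in> borel_measurable lborel"
    by (rule borel_measurable_times) (use assms in \<open>auto simp: sq_integrable_def\<close>)
  show "AE t in lborel. norm (a t i * b t i) \<le> norm ((a t i)\<^sup>2 + (b t i)\<^sup>2)"
  proof (rule AE_I2)
    fix t
    have "0 \<le> (\<bar>a t i\<bar> - \<bar>b t i\<bar>)\<^sup>2" by simp
    then have "2 * \<bar>a t i * b t i\<bar> \<le> (a t i)\<^sup>2 + (b t i)\<^sup>2"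
      by (simp add: power2_diff abs_mult)
    then show "norm (a t i * b t i) \<le> norm ((a t i)\<^sup>2 + (b t i)\<^sup>2)" by simp
  qed
qed

lemma sq_integrable_sig_diff:
  assumes "sq_integrable n a" "sq_integrable n b"
  shows "sq_integrable n (sig_diff a b)"
  unfolding sq_integrable_def
proof (intro allI impI conjI)
  fix i assume i: "i < n"
  show "(\<lambda>t. sig_diff a b t i) \<in> borel_measurable lborel"
    unfolding sig_diff_def
    by (rule borel_measurable_diff) (use assms i in \<open>auto simp: sq_integrable_def\<close>)
  have "(\<lambda>t. (sig_diff a b t i)\<^sup>2) = (\<lambda>t. (a t i)\<^sup>2 - 2 * (a t i * b t i) + (b t i)\<^sup>2)"
    unfolding sig_diff_def by (simp add: power2_eq_square algebra_simps)
  then show "integrable lborel (\<lambda>t. (sig_diff a b t i)\<^sup>2)"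
    using assms i sq_integrable_integrable_mult[OF assms i] unfolding sq_integrable_def by auto
qed

lemma lint_inner_self_nonneg: "lint_inner n a a \<ge> 0"
  unfolding lint_inner_def by (intro sum_nonneg integral_nonneg_AE) auto

lemma lint_inner_add_scaled:
  assumes "sq_integrable n a" "sq_integrable n b"
  shows "lint_inner n (\<lambda>t i. a t i + l * b t i) (\<lambda>t i. a t i + l * b t i)
     = lint_inner n a a + 2 * l * lint_inner n a b + l\<^sup>2 * lint_inner n b b"
proof -
  have "(LINT t|lborel. (a t i + l * b t i) * (a t i + l * b t i))
     = (LINT t|lborel. a t i * a t i) + 2 * l * (LINT t|lborel. a t i * b t i)
       + l\<^sup>2 * (LINT t|lborel. b t i * b t i)" if i: "i < n" for i
  proof -
    have "(\<lambda>t. (a t i + l * b t i) * (a t i + l * b t i)) =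
       (\<lambda>t. a t i * a t i + (2 * l) * (a t i * b t i) + l\<^sup>2 * (b t i * b t i))"
      by (auto simp: algebra_simps power2_eq_square)
    then show ?thesis
      using sq_integrable_integrable_mult[OF assms(1) assms(1) i]
        sq_integrable_integrable_mult[OF assms(1) assms(2) i]
        sq_integrable_integrable_mult[OF assms(2) assms(2) i]
      by simp
  qed
  then show ?thesis
    unfolding lint_inner_def by (simp add: sum.distrib sum_distrib_left)
qed

lemma quadratic_nonneg_imp_discrim_le:
  fixes A B C :: real
  assumes "B \<ge> 0" and nonneg: "\<And>l. 0 \<le> A + 2 * l * C + l\<^sup>2 * B"
  shows "C\<^sup>2 \<le> A * B"
proof (cases "B = 0")
  case True
  have "C = 0"
  proof (rule ccontr)
    assume "C \<noteq> 0"
    then have "A + 2 * (- (\<bar>A\<bar> + 1) / (2 * C)) * C = A - \<bar>A\<bar> - 1" by simp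
    with True nonneg[of "- (\<bar>A\<bar> + 1) / (2 * C)"] show False by simp
  qed
  with True show ?thesis by simp
next
  case False
  with assms(1) have "B > 0" by simp
  with nonneg[of "- C / B"] show ?thesis by (simp add: field_simps power2_eq_square)
qed

lemma lint_inner_Cauchy_Schwarz:
  assumes "sq_integrable n a" "sq_integrable n b"
  shows "(lint_inner n a b)\<^sup>2 \<le> lint_inner n a a * lint_inner n b b"
proof (rule quadratic_nonneg_imp_discrim_le)
  show "0 \<le> lint_inner n b b" by (rule lint_inner_self_nonneg)
  fix l
  show "0 \<le> lint_inner n a a + 2 * l * lint_inner n a b + l\<^sup>2 * lint_inner n b b"
    using lint_inner_self_nonneg unfolding lint_inner_add_scaled[OF assms, symmetric] .
qed

lemma lint_inner_self_eq_0_imp_AE: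
  assumes "sq_integrable n a" "lint_inner n a a = 0" "i < n"
  shows "AE t in lborel. a t i = 0"
proof -
  have "\<forall>j\<in>{..<n}. (LINT t|lborel. a t j * a t j) = 0"
    using assms(2) sum_nonneg_eq_0_iff[of "{..<n}" "\<lambda>j. LINT t|lborel. a t j * a t j"]
    unfolding lint_inner_def by (simp add: integral_nonneg_AE)
  then have "(LINT t|lborel. a t i * a t i) = 0" using assms(3) by auto
  then have "AE t in lborel. a t i * a t i = 0"
    using integral_nonneg_eq_0_iff_AE[OF sq_integrable_integrable_mult[OF assms(1) assms(1) assms(3)]]
    by auto
  then show ?thesis by auto
qed

lemma L2cls_self: "sig n f \<Longrightarrow> f \<in> L2cls n f"
  unfolding L2cls_def by auto

lemma rep_L2cls: "sig n f \<Longrightarrow> rep (L2cls n f) \<in> L2cls n f"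
  unfolding rep_def by (rule someI[where P = "\<lambda>g. g \<in> L2cls n f"]) (rule L2cls_self)

lemma L2cls_eqI:
  assumes "AE t in lborel. f t = g t"
  shows "L2cls n f = L2cls n g"
proof -
  have "(AE t in lborel. h t = f t) \<longleftrightarrow> (AE t in lborel. h t = g t)" for h
    using assms by (auto elim: AE_mp)
  then show ?thesis unfolding L2cls_def by blast
qed

lemma L2cls_in_L2: "sig n f \<Longrightarrow> L2cls n f \<in> L2 n"
  unfolding L2_def by auto

lemma L2_rep:
  assumes "u \<in> L2 n"
  shows "sig n (rep u)" and "u = L2cls n (rep u)"
proof -
  obtain f where f: "sig n f" "u = L2cls n f" using assms unfolding L2_def by auto
  then have "rep u \<in> L2cls n f" using rep_L2cls by simp
  then have "sig n (rep u)" and "AE t in lborel. rep u t = f t" unfolding L2cls_def by auto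
  then show "sig n (rep u)" and "u = L2cls n (rep u)" using L2cls_eqI f(2) by auto
qed

lemma sq_integrable_rep_diff:
  "u \<in> L2 n \<Longrightarrow> v \<in> L2 n \<Longrightarrow> sq_integrable n (sig_diff (rep u) (rep v))"
  using L2_rep(1) by (intro sq_integrable_sig_diff sig_imp_sq_integrable) auto

lemma ip_diff_L2cls:
  assumes "sig n f1" "sig n f2" "sig n g1" "sig n g2"
  shows "ip_diff n (L2cls n f1) (L2cls n f2) (L2cls n g1) (L2cls n g2)
       = lint_inner n (sig_diff f1 f2) (sig_diff g1 g2)"
  unfolding ip_diff_eq_lint_inner lint_inner_def
proof (rule sum.cong[OF refl])
  fix i assume "i \<in> {..<n}"
  have rep: "sig n (rep (L2cls n f))" and ae: "AE t in lborel. rep (L2cls n f) t = f t"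
    if "sig n f" for f
    using rep_L2cls[OF that] unfolding L2cls_def by auto
  have meas: "(\<lambda>t. f t i) \<in> borel_measurable lborel" if "sig n f" for f
    using that \<open>i \<in> {..<n}\<close> unfolding sig_def by auto
  show "(LINT t|lborel. sig_diff (rep (L2cls n f1)) (rep (L2cls n f2)) t i
                      * sig_diff (rep (L2cls n g1)) (rep (L2cls n g2)) t i)
      = (LINT t|lborel. sig_diff f1 f2 t i * sig_diff g1 g2 t i)"
  proof (rule integral_cong_AE)
    show "(\<lambda>t. sig_diff (rep (L2cls n f1)) (rep (L2cls n f2)) t i
              * sig_diff (rep (L2cls n g1)) (rep (L2cls n g2)) t i) \<in> borel_measurable lborel"
      unfolding sig_diff_def using rep assms by (intro borel_measurable_times borel_measurable_diff meas) auto
    show "(\<lambda>t. sig_diff f1 f2 t i * sig_diff g1 g2 t i) \<in> borel_measurable lborel"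
      unfolding sig_diff_def by (intro borel_measurable_times borel_measurable_diff meas assms)
    show "AE t in lborel. sig_diff (rep (L2cls n f1)) (rep (L2cls n f2)) t i
                        * sig_diff (rep (L2cls n g1)) (rep (L2cls n g2)) t i
                      = sig_diff f1 f2 t i * sig_diff g1 g2 t i"
      using ae[OF assms(1)] ae[OF assms(2)] ae[OF assms(3)] ae[OF assms(4)]
      by eventually_elim (simp add: sig_diff_def)
  qed
qed

lemma ip_diff_same_inputs: "ip_diff n u u x y = 0"
  unfolding ip_diff_def by simp

lemma nrm_diff_self: "nrm_diff n u u = 0"
  unfolding nrm_diff_def ip_diff_def by simp

lemma ip_diff_swap: "ip_diff n u2 u1 y2 y1 = ip_diff n u1 u2 y1 y2"
  unfolding ip_diff_def by (rule sum.cong) (auto simp: algebra_simps)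

lemma nrm_diff_commute: "nrm_diff n u2 u1 = nrm_diff n u1 u2"
  unfolding nrm_diff_def by (simp only: ip_diff_swap)

lemma ip_diff_self_nonneg: "ip_diff n u v u v \<ge> 0"
  unfolding ip_diff_eq_lint_inner by (rule lint_inner_self_nonneg)

lemma nrm_diff_power2: "(nrm_diff n u v)\<^sup>2 = ip_diff n u v u v"
  unfolding nrm_diff_def using ip_diff_self_nonneg by simp

lemma ip_diff_Cauchy_Schwarz:
  assumes "u1 \<in> L2 n" "u2 \<in> L2 n" "y1 \<in> L2 n" "y2 \<in> L2 n"
  shows "(ip_diff n u1 u2 y1 y2)\<^sup>2 \<le> (nrm_diff n u1 u2 * nrm_diff n y1 y2)\<^sup>2"
  unfolding power_mult_distrib nrm_diff_power2 ip_diff_eq_lint_inner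
  using assms by (intro lint_inner_Cauchy_Schwarz sq_integrable_rep_diff)

lemma nrm_diff_pos:
  assumes "u1 \<in> L2 n" "u2 \<in> L2 n" "u1 \<noteq> u2"
  shows "nrm_diff n u1 u2 > 0"
proof (rule ccontr)
  assume "\<not> ?thesis"
  then have zero: "lint_inner n (sig_diff (rep u1) (rep u2)) (sig_diff (rep u1) (rep u2)) = 0"
    using ip_diff_self_nonneg[of n u1 u2] unfolding nrm_diff_def ip_diff_eq_lint_inner by simp
  have "AE t in lborel. rep u1 t i = rep u2 t i" for i
  proof (cases "i < n")
    case True
    from lint_inner_self_eq_0_imp_AE[OF sq_integrable_rep_diff[OF assms(1,2)] zero True]
    show ?thesis by (auto elim: AE_mp simp: sig_diff_def)
  next
    case False
    then show ?thesis using L2_rep(1)[OF assms(1)] L2_rep(1)[OF assms(2)] unfolding sig_def by auto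
  qed
  then have "AE t in lborel. \<forall>i. rep u1 t i = rep u2 t i"
    by (simp add: AE_all_countable)
  then have "AE t in lborel. rep u1 t = rep u2 t"
    by eventually_elim auto
  then have "u1 = u2" using L2cls_eqI L2_rep(2)[OF assms(1)] L2_rep(2)[OF assms(2)] by metis
  with assms(3) show False by simp
qed

definition dissipative_pair ::
    "nat \<Rightarrow> real \<Rightarrow> real \<Rightarrow> real \<Rightarrow> (real \<Rightarrow> nat \<Rightarrow> real) set \<Rightarrow> (real \<Rightarrow> nat \<Rightarrow> real) set
       \<Rightarrow> (real \<Rightarrow> nat \<Rightarrow> real) set \<Rightarrow> (real \<Rightarrow> nat \<Rightarrow> real) set \<Rightarrow> bool" where
  "dissipative_pair n \<epsilon> \<mu> \<gamma> u1 u2 y1 y2 \<longleftrightarrow>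
     nrm_diff n y1 y2 \<le> \<mu> * nrm_diff n u1 u2 \<or>
     (ip_diff n u1 u2 y1 y2 \<ge> \<epsilon> * (nrm_diff n u1 u2)\<^sup>2 \<and>
      nrm_diff n y1 y2 \<le> \<gamma> * nrm_diff n u1 u2)"

definition srg_point ::
    "nat \<Rightarrow> (real \<Rightarrow> nat \<Rightarrow> real) set \<Rightarrow> (real \<Rightarrow> nat \<Rightarrow> real) set
       \<Rightarrow> (real \<Rightarrow> nat \<Rightarrow> real) set \<Rightarrow> (real \<Rightarrow> nat \<Rightarrow> real) set \<Rightarrow> real \<Rightarrow> complex" where
  "srg_point n u1 u2 y1 y2 s =
     (if y1 = y2 then 0
      else complex_of_real (nrm_diff n y1 y2 / nrm_diff n u1 u2) * cis (s * angle_diff n u1 u2 y1 y2))"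

lemma strongly_incr_dissipative_iff_pairs:
  "strongly_incr_dissipative n \<epsilon> \<mu> \<gamma> H \<longleftrightarrow>
     (\<forall>u1 y1 u2 y2. (u1, y1) \<in> H \<longrightarrow> (u2, y2) \<in> H \<longrightarrow> dissipative_pair n \<epsilon> \<mu> \<gamma> u1 u2 y1 y2)"
  unfolding strongly_incr_dissipative_def dissipative_pair_def by simp

lemma dissipative_pair_commute:
  "dissipative_pair n \<epsilon> \<mu> \<gamma> u2 u1 y2 y1 \<longleftrightarrow> dissipative_pair n \<epsilon> \<mu> \<gamma> u1 u2 y1 y2"
  unfolding dissipative_pair_def by (simp only: nrm_diff_commute ip_diff_swap)

lemma dissipative_pair_same_input_iff:
  assumes "y1 \<in> L2 n" "y2 \<in> L2 n"
  shows "dissipative_pair n \<epsilon> \<mu> \<gamma> u u y1 y2 \<longleftrightarrow> y1 = y2"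
  using nrm_diff_pos[OF assms] unfolding dissipative_pair_def
  by (cases "y1 = y2") (auto simp: nrm_diff_self ip_diff_same_inputs)

lemma zH_distinct_inputs:
  "u1 \<noteq> u2 \<Longrightarrow> zH n H u1 u2 =
     {Some (srg_point n u1 u2 y1 y2 s) | y1 y2 s. (u1, y1) \<in> H \<and> (u2, y2) \<in> H \<and> s \<in> {1, -1}}"
  unfolding zH_def srg_point_def by simp

lemma zH_same_input:
  "zH n H u u = (if \<exists>y1 y2. (u, y1) \<in> H \<and> (u, y2) \<in> H \<and> y1 \<noteq> y2 then {None} else {})"
  unfolding zH_def by simp

lemma dissipative_pair_iff_srg_point:
  assumes L2: "u1 \<in> L2 n" "u2 \<in> L2 n" "y1 \<in> L2 n" "y2 \<in> L2 n" and "\<mu> > 0"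
    and "u1 \<noteq> u2" and "s \<in> {1, -1}"
  shows "dissipative_pair n \<epsilon> \<mu> \<gamma> u1 u2 y1 y2 \<longleftrightarrow> srg_point n u1 u2 y1 y2 s \<in> D1 \<mu> \<union> D2 \<epsilon> \<gamma>"
proof (cases "y1 = y2")
  case True
  then show ?thesis using nrm_diff_pos[OF L2(1,2) \<open>u1 \<noteq> u2\<close>] \<open>\<mu> > 0\<close>
    unfolding dissipative_pair_def srg_point_def D1_def by (simp add: nrm_diff_self)
next
  case False
  define a where "a = nrm_diff n u1 u2"
  define b where "b = nrm_diff n y1 y2"
  define c where "c = ip_diff n u1 u2 y1 y2"
  have a: "a > 0" using nrm_diff_pos[OF L2(1,2) \<open>u1 \<noteq> u2\<close>] by (simp add: a_def)
  have b: "b > 0" using nrm_diff_pos[OF L2(3,4) False] by (simp add: b_def)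
  have "\<bar>c\<bar> \<le> a * b"
    using ip_diff_Cauchy_Schwarz[OF L2] a b unfolding a_def b_def c_def
    by (metis abs_le_square_iff abs_of_pos mult_pos_pos)
  then have "\<bar>c / (a * b)\<bar> \<le> 1" using a b by (simp add: abs_le_iff divide_le_eq le_divide_eq)
  then have "cos (s * arccos (c / (a * b))) = c / (a * b)"
    using \<open>s \<in> {1, -1}\<close> by (auto simp: cos_arccos_abs)
  moreover have point: "srg_point n u1 u2 y1 y2 s = complex_of_real (b / a) * cis (s * arccos (c / (a * b)))"
    unfolding srg_point_def angle_diff_def a_def b_def c_def using False by simp
  ultimately have "cmod (srg_point n u1 u2 y1 y2 s) = b / a"
    and "Re (srg_point n u1 u2 y1 y2 s) = c / a\<^sup>2"
    unfolding point norm_mult norm_of_real using a b by (simp_all add: power2_eq_square field_simps)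
  moreover have "b \<le> \<mu> * a \<longleftrightarrow> b / a \<le> \<mu>" "b \<le> \<gamma> * a \<longleftrightarrow> b / a \<le> \<gamma>"
      "\<epsilon> * a\<^sup>2 \<le> c \<longleftrightarrow> \<epsilon> \<le> c / a\<^sup>2"
    using a by (simp_all add: divide_le_eq le_divide_eq mult.commute)
  ultimately show ?thesis
    unfolding dissipative_pair_def D1_def D2_def a_def[symmetric] b_def[symmetric] c_def[symmetric]
    by auto
qed

lemma SRG_subset_discs:
  assumes "H \<in> S_class n \<epsilon> \<mu> \<gamma>" "\<mu> > 0"
  shows "SRG n H \<subseteq> Some ` (D1 \<mu> \<union> D2 \<epsilon> \<gamma>)"
proof
  fix w assume "w \<in> SRG n H"
  then obtain u1 u2 where u: "u1 \<in> L2 n" "u2 \<in> L2 n" and w: "w \<in> zH n H u1 u2"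
    unfolding SRG_def by auto
  have L2: "H \<subseteq> L2 n \<times> L2 n" using assms(1) unfolding S_class_def is_op_def by auto
  have pair: "\<And>u1 y1 u2 y2. (u1, y1) \<in> H \<Longrightarrow> (u2, y2) \<in> H \<Longrightarrow> dissipative_pair n \<epsilon> \<mu> \<gamma> u1 u2 y1 y2"
    using assms(1) unfolding S_class_def strongly_incr_dissipative_iff_pairs by auto
  show "w \<in> Some ` (D1 \<mu> \<union> D2 \<epsilon> \<gamma>)"
  proof (cases "u1 = u2")
    case False
    then obtain y1 y2 s where w: "w = Some (srg_point n u1 u2 y1 y2 s)"
      and y: "(u1, y1) \<in> H" "(u2, y2) \<in> H" and "s \<in> {1, -1}"
      using w zH_distinct_inputs[OF False] by blast
    have "y1 \<in> L2 n" "y2 \<in> L2 n" using y L2 by auto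
    then have "srg_point n u1 u2 y1 y2 s \<in> D1 \<mu> \<union> D2 \<epsilon> \<gamma>"
      using dissipative_pair_iff_srg_point[OF u _ _ assms(2) False \<open>s \<in> {1, -1}\<close>] pair[OF y]
      by simp
    with w show ?thesis by simp
  next
    case True
    then obtain y1 y2 where y: "(u1, y1) \<in> H" "(u1, y2) \<in> H" and "y1 \<noteq> y2"
      using w unfolding True zH_same_input by (auto split: if_splits)
    moreover have "y1 \<in> L2 n" "y2 \<in> L2 n" using y L2 by auto
    ultimately show ?thesis using dissipative_pair_same_input_iff pair[OF y] by simp
  qed
qed

lemma S_class_if_SRG_subset_discs:
  assumes "is_op n H" "SRG n H \<subseteq> Some ` (D1 \<mu> \<union> D2 \<epsilon> \<gamma>)" "\<mu> > 0"
  shows "H \<in> S_class n \<epsilon> \<mu> \<gamma>"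
  unfolding S_class_def strongly_incr_dissipative_iff_pairs
proof (intro CollectI conjI assms(1) allI impI)
  fix u1 y1 u2 y2 assume y: "(u1, y1) \<in> H" "(u2, y2) \<in> H"
  then have L2: "u1 \<in> L2 n" "u2 \<in> L2 n" "y1 \<in> L2 n" "y2 \<in> L2 n"
    using assms(1) unfolding is_op_def by auto
  have "zH n H u1 u2 \<subseteq> Some ` (D1 \<mu> \<union> D2 \<epsilon> \<gamma>)"
    using assms(2) L2(1,2) unfolding SRG_def by blast
  show "dissipative_pair n \<epsilon> \<mu> \<gamma> u1 u2 y1 y2"
  proof (cases "u1 = u2")
    case True
    have "y1 = y2"
    proof (rule ccontr)
      assume "y1 \<noteq> y2"
      with y have "None \<in> zH n H u1 u2" unfolding True zH_same_input by auto
      with \<open>zH n H u1 u2 \<subseteq> _\<close> show False by auto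
    qed
    with True show ?thesis using dissipative_pair_same_input_iff[OF L2(3,4)] by simp
  next
    case False
    with \<open>zH n H u1 u2 \<subseteq> _\<close> y have "srg_point n u1 u2 y1 y2 1 \<in> D1 \<mu> \<union> D2 \<epsilon> \<gamma>"
      unfolding zH_distinct_inputs[OF False] by blast
    then show ?thesis using dissipative_pair_iff_srg_point[OF L2 assms(3) False, where s = 1] by simp
  qed
qed

lemma polar_form_arccos:
  fixes z :: complex
  assumes "z \<noteq> 0"
  shows "complex_of_real (cmod z) * cis ((if Im z \<ge> 0 then 1 else -1) * arccos (Re z / cmod z)) = z"
proof -
  define r where "r = cmod z"
  have r: "r > 0" using assms by (simp add: r_def)
  have "\<bar>Re z\<bar> \<le> r" unfolding r_def by (rule abs_Re_le_cmod)
  then have bound: "\<bar>Re z / r\<bar> \<le> 1" using r by (simp add: abs_le_iff divide_le_eq le_divide_eq)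
  have "r\<^sup>2 = (Re z)\<^sup>2 + (Im z)\<^sup>2" unfolding r_def by (rule cmod_power2)
  then have "(\<bar>Im z\<bar> / r)\<^sup>2 = (r\<^sup>2 - (Re z)\<^sup>2) / r\<^sup>2" by (simp add: power_divide)
  also have "\<dots> = 1 - (Re z / r)\<^sup>2" using r by (simp add: diff_divide_distrib power_divide)
  finally have "sin (arccos (Re z / r)) = sqrt ((\<bar>Im z\<bar> / r)\<^sup>2)"
    by (simp add: sin_arccos_abs[OF bound])
  also have "\<dots> = \<bar>Im z\<bar> / r" using r by simp
  finally have "sin (arccos (Re z / r)) = \<bar>Im z\<bar> / r" .
  moreover have "cos (arccos (Re z / r)) = Re z / r"
    using bound by (simp add: cos_arccos_abs)
  ultimately show ?thesis
    using r by (intro complex_eqI) (auto simp: r_def[symmetric])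
qed

definition step2 :: "real \<Rightarrow> real \<Rightarrow> real \<Rightarrow> real" where
  "step2 c1 c2 t = c1 * indicator {0..<1} t + c2 * indicator {1..<2} t"

definition step_sig :: "real \<Rightarrow> real \<Rightarrow> real \<Rightarrow> nat \<Rightarrow> real" where
  "step_sig c1 c2 = (\<lambda>t i. if i = 0 then step2 c1 c2 t else 0)"

lemma step2_mult: "step2 a1 a2 t * step2 b1 b2 t = step2 (a1 * b1) (a2 * b2) t"
  unfolding step2_def by (auto simp: indicator_def)

lemma step2_diff: "step2 a1 a2 t - step2 b1 b2 t = step2 (a1 - b1) (a2 - b2) t"
  unfolding step2_def by (simp add: algebra_simps)

lemma integrable_step2: "integrable lborel (step2 c1 c2)"
  unfolding step2_def[abs_def]
  by (intro Bochner_Integration.integrable_add Bochner_Integration.integrable_mult_right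
      integrable_real_indicator) auto

lemma integral_step2: "(LINT t|lborel. step2 c1 c2 t) = c1 + c2"
proof -
  have "integrable lborel (indicator {0..<1::real} :: real \<Rightarrow> real)"
    and "integrable lborel (indicator {1..<2::real} :: real \<Rightarrow> real)" by auto
  then show ?thesis unfolding step2_def by simp
qed

lemma sig_step_sig: "sig 1 (step_sig c1 c2)"
proof -
  have "step2 c1 c2 \<in> borel_measurable lborel"
    unfolding step2_def[abs_def] by measurable
  moreover have "integrable lborel (\<lambda>t. (step2 c1 c2 t)\<^sup>2)"
    unfolding power2_eq_square step2_mult by (rule integrable_step2)
  ultimately show ?thesis unfolding sig_def step_sig_def by (auto simp: step2_def)
qed

lemma ip_diff_step_sig:
  "ip_diff 1 (L2cls 1 (step_sig a1 a2)) (L2cls 1 (step_sig b1 b2))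
             (L2cls 1 (step_sig c1 c2)) (L2cls 1 (step_sig d1 d2))
     = (a1 - b1) * (c1 - d1) + (a2 - b2) * (c2 - d2)"
  unfolding ip_diff_L2cls[OF sig_step_sig sig_step_sig sig_step_sig sig_step_sig]
  unfolding lint_inner_def sig_diff_def step_sig_def by (simp add: step2_diff step2_mult integral_step2)

lemma SRG_S_contains_discs:
  assumes "z \<in> D1 \<mu> \<union> D2 \<epsilon> \<gamma>" "\<mu> > 0"
  shows "Some z \<in> SRG_S \<epsilon> \<mu> \<gamma>"
proof -
  define s :: real where "s = (if Im z \<ge> 0 then 1 else -1)"
  define U0 where "U0 = L2cls 1 (step_sig 0 0)"
  define U1 where "U1 = L2cls 1 (step_sig 1 0)"
  define Y where "Y = L2cls 1 (step_sig (Re z) \<bar>Im z\<bar>)"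
  have L2: "U0 \<in> L2 1" "U1 \<in> L2 1" "Y \<in> L2 1"
    unfolding U0_def U1_def Y_def by (rule L2cls_in_L2[OF sig_step_sig])+
  have "ip_diff 1 U1 U0 U1 U0 = 1" unfolding U0_def U1_def ip_diff_step_sig by simp
  then have nrm_U1: "nrm_diff 1 U1 U0 = 1" and "U1 \<noteq> U0"
    unfolding nrm_diff_def by (auto simp: ip_diff_same_inputs)
  have nrm_Y: "nrm_diff 1 Y U0 = cmod z"
    unfolding nrm_diff_def U0_def Y_def ip_diff_step_sig cmod_def by (simp add: power2_eq_square)
  have "srg_point 1 U1 U0 Y U0 s = z"
  proof (cases "Y = U0")
    case True
    then show ?thesis using nrm_Y by (simp add: nrm_diff_self srg_point_def)
  next
    case False
    have "ip_diff 1 U1 U0 Y U0 = Re z" unfolding U0_def U1_def Y_def ip_diff_step_sig by simp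
    then have "angle_diff 1 U1 U0 Y U0 = arccos (Re z / cmod z)"
      unfolding angle_diff_def nrm_U1 nrm_Y by simp
    moreover have "z \<noteq> 0" using False nrm_Y nrm_diff_pos[OF L2(3,1)] by auto
    ultimately show ?thesis
      using False polar_form_arccos unfolding srg_point_def nrm_U1 nrm_Y s_def by simp
  qed
  moreover have "s \<in> {1, -1}" unfolding s_def by simp
  moreover define H where "H = {(U0, U0), (U1, Y)}"
  ultimately have "Some z \<in> zH 1 H U1 U0"
    unfolding zH_distinct_inputs[OF \<open>U1 \<noteq> U0\<close>] by blast
  then have "Some z \<in> SRG 1 H" unfolding SRG_def using L2 by blast
  moreover have "H \<in> S_class 1 \<epsilon> \<mu> \<gamma>"
  proof -
    have "dissipative_pair 1 \<epsilon> \<mu> \<gamma> U1 U0 Y U0"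
      using dissipative_pair_iff_srg_point[OF L2(2,1,3,1) assms(2) \<open>U1 \<noteq> U0\<close> \<open>s \<in> {1, -1}\<close>]
        \<open>srg_point 1 U1 U0 Y U0 s = z\<close> assms(1) by simp
    moreover from this have "dissipative_pair 1 \<epsilon> \<mu> \<gamma> U0 U1 U0 Y"
      by (simp only: dissipative_pair_commute)
    moreover have "dissipative_pair 1 \<epsilon> \<mu> \<gamma> u u y y" for u y
      unfolding dissipative_pair_def by (simp add: nrm_diff_self)
    ultimately show ?thesis
      unfolding S_class_def is_op_def strongly_incr_dissipative_iff_pairs H_def
      using L2 by auto
  qed
  ultimately show ?thesis unfolding SRG_S_def by force
qed

theorem lemma1:
  fixes \<epsilon> \<mu> \<gamma> :: real
  assumes "\<mu> > 0" and "\<gamma> > 0" and "\<epsilon> \<ge> 0"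
  shows "SRG_S \<epsilon> \<mu> \<gamma> = Some ` (D1 \<mu> \<union> D2 \<epsilon> \<gamma>)
    \<and> (\<forall>n \<ge> 1. \<forall>H. is_op n H \<longrightarrow>
          (H \<in> S_class n \<epsilon> \<mu> \<gamma> \<longleftrightarrow> SRG n H \<subseteq> SRG_S \<epsilon> \<mu> \<gamma>))"
proof -
  have SRG_S_eq: "SRG_S \<epsilon> \<mu> \<gamma> = Some ` (D1 \<mu> \<union> D2 \<epsilon> \<gamma>)"
  proof
    show "SRG_S \<epsilon> \<mu> \<gamma> \<subseteq> Some ` (D1 \<mu> \<union> D2 \<epsilon> \<gamma>)"
      unfolding SRG_S_def using SRG_subset_discs[OF _ assms(1)] by blast
    show "Some ` (D1 \<mu> \<union> D2 \<epsilon> \<gamma>) \<subseteq> SRG_S \<epsilon> \<mu> \<gamma>"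
      using SRG_S_contains_discs[OF _ assms(1)] by blast
  qed
  show ?thesis
    unfolding SRG_S_eq
    using SRG_subset_discs[OF _ assms(1)] S_class_if_SRG_subset_discs[OF _ _ assms(1)] by blast
qed

end
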